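(* Let $W,V$ be subspaces of $\mathbb{R}^n$ with $\mathbb{R}^n=W\oplus V^\perp$, and let $\mu$ and $\nu$ be probabilistic frames for $W$ and $V$, respectively. (1) If $\nu$ is an oblique $\epsilon$-approximately dual probabilistic frame of $\mu$ on $V$, then $\mu$ and $\nu$ perform probabilistic $\sqrt B\,\epsilon$-consistent reconstruction, where $B>0$ is an upper frame bound for $\nu$. (2) Conversely, if $\mu$ and $\nu$ perform probabilistic $\alpha$-consistent reconstruction, then $\nu$ is an oblique $\epsilon$-approximately dual probabilistic frame of $\mu$ on $V$, where $\epsilon=\alpha\sqrt{M_2\big((\boldsymbol{\pi}_{WV^\perp}\mathbf{S}_\nu^\dagger)_\#\nu\big)}$.
   Context: $\mathcal{P}_2(S)$ denotes Borel probability measures on $\mathbb{R}^n$ concentrated on the subspace $S$ with finite second moment $M_2(\eta)=\int\|\mathbf{x}\|^2d\eta(\mathbf{x})$. $\mu\in\mathcal{P}_2(W)$ is a probabilistic frame for $W$ with bounds $0<A\le B$ if $A\|\mathbf{x}\|^2\le\int_W|\langle\mathbf{x},\mathbf{y}\rangle|^2d\mu(\mathbf{y})\le B\|\mathbf{x}\|^2$ for all $\mathbf{x}\in W$. The frame operator of $\nu$ is $\mathbf{S}_\nu=\int\mathbf{y}\mathbf{y}^td\nu(\mathbf{y})$ with Moore–Penrose inverse $\mathbf{S}_\nu^\dagger$. $\Gamma(\mu,\nu)$ is the set of Borel probability measures on $W\times V$ with marginals $\mu,\nu$. $\boldsymbol{\pi}_{WV^\perp}$ is the oblique projection onto $W$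 along $V^\perp$. For $\epsilon\ge0$, $\nu$ is an oblique $\epsilon$-approximately dual probabilistic frame of $\mu$ on $V$ if there is $\gamma\in\Gamma(\mu,\nu)$ with $\left\|\int_{W\times V}\mathbf{x}\mathbf{y}^td\gamma(\mathbf{x},\mathbf{y})-\boldsymbol{\pi}_{WV^\perp}\right\|\le\epsilon$ (operator norm induced by the Euclidean norm). For $\epsilon\ge0$, $\mu$ and $\nu$ perform probabilistic $\epsilon$-consistent reconstruction if there is $\gamma\in\Gamma(\mu,\nu)$ such that for every $\mathbf{f}\in\mathbb{R}^n$, $\left(\int_V|\langle\mathbf{f}-\hat{\mathbf{f}},\mathbf{z}\rangle|^2d\nu(\mathbf{z})\right)^{1/2}\le\epsilon\|\mathbf{f}\|$, where $\hat{\mathbf{f}}=\int_{W\times V}\mathbf{x}\langle\mathbf{y},\mathbf{f}\rangle\,d\gamma(\mathbf{x},\mathbf{y})$. *)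

theory Defs
  imports "HOL-Probability.Probability"
begin

definition outer :: "real^'n \<Rightarrow> real^'n \<Rightarrow> real^'n^'n" where
  "outer x y = (\<chi> i j. x $ i * y $ j)"

definition P2 :: "(real^'n) set \<Rightarrow> (real^'n) measure set" where
  "P2 S = {\<eta>. prob_space \<eta> \<and> sets \<eta> = sets borel \<and> (AE x in \<eta>. x \<in> S)
              \<and> integrable \<eta> (\<lambda>x. (norm x)^2)}"

definition M2 :: "(real^'n) measure \<Rightarrow> real" where
  "M2 \<eta> = (\<integral>x. (norm x)^2 \<partial>\<eta>)"

definition prob_frame :: "(real^'n) measure \<Rightarrow> (real^'n) set \<Rightarrow> real \<Rightarrow> real \<Rightarrow> bool" where
  "prob_frame \<mu> W A B \<longleftrightarrow> \<mu> \<in> P2 W \<and> 0 < A \<and> A \<le> B \<and>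
     (\<forall>x\<in>W. A * (norm x)^2 \<le> (\<integral>y. \<bar>x \<bullet> y\<bar>^2 \<partial>\<mu>) \<and> (\<integral>y. \<bar>x \<bullet> y\<bar>^2 \<partial>\<mu>) \<le> B * (norm x)^2)"

definition frame_op :: "(real^'n) measure \<Rightarrow> real^'n^'n" where
  "frame_op \<nu> = (\<integral>y. outer y y \<partial>\<nu>)"

definition mp_inverse :: "real^'n^'n \<Rightarrow> real^'n^'n" where
  "mp_inverse A = (THE X. A ** X ** A = A \<and> X ** A ** X = X \<and>
       transpose (A ** X) = A ** X \<and> transpose (X ** A) = X ** A)"

definition couplings :: "(real^'n) measure \<Rightarrow> (real^'n) measure \<Rightarrow> ((real^'n) \<times> (real^'n)) measure set" where
  "couplings \<mu> \<nu> = {\<gamma>. prob_space \<gamma> \<and> sets \<gamma> = sets (borel \<Otimes>\<^sub>M borel) \<and>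
       distr \<gamma> borel fst = \<mu> \<and> distr \<gamma> borel snd = \<nu>}"

text \<open>Oblique projection onto W along U (meaningful when R^n = W \<oplus> U).\<close>
definition oblique_proj :: "(real^'n) set \<Rightarrow> (real^'n) set \<Rightarrow> real^'n \<Rightarrow> real^'n" where
  "oblique_proj W U x = (THE w. w \<in> W \<and> x - w \<in> U)"

definition cross_op :: "((real^'n) \<times> (real^'n)) measure \<Rightarrow> real^'n^'n" where
  "cross_op \<gamma> = (\<integral>p. outer (fst p) (snd p) \<partial>\<gamma>)"

definition oblique_approx_dual ::
  "real \<Rightarrow> (real^'n) measure \<Rightarrow> (real^'n) measure \<Rightarrow> (real^'n) set \<Rightarrow> (real^'n) set \<Rightarrow> bool" where
  "oblique_approx_dual \<epsilon> \<nu> \<mu> W V \<longleftrightarrow> 0 \<le> \<epsilon> \<and>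
     (\<exists>\<gamma>\<in>couplings \<mu> \<nu>.
        onorm (\<lambda>v. (cross_op \<gamma> - matrix (oblique_proj W (orthogonal_comp V))) *v v) \<le> \<epsilon>)"

definition reconstr :: "((real^'n) \<times> (real^'n)) measure \<Rightarrow> real^'n \<Rightarrow> real^'n" where
  "reconstr \<gamma> f = (\<integral>p. ((snd p) \<bullet> f) *\<^sub>R fst p \<partial>\<gamma>)"

definition consistent_reconstruction ::
  "real \<Rightarrow> (real^'n) measure \<Rightarrow> (real^'n) measure \<Rightarrow> bool" where
  "consistent_reconstruction \<epsilon> \<mu> \<nu> \<longleftrightarrow> 0 \<le> \<epsilon> \<and>
     (\<exists>\<gamma>\<in>couplings \<mu> \<nu>. \<forall>f.
        sqrt (\<integral>z. \<bar>(f - reconstr \<gamma> f) \<bullet> z\<bar>^2 \<partial>\<nu>) \<le> \<epsilon> * norm f)"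

end

theory Submission
  imports Defs
begin

(* Let P be the oblique projection onto W along the orthogonal complement of V, C the cross
   operator of a coupling, and d = (C - P) f.  The reconstruction C f lies in W and f - P f is
   orthogonal to V, which carries nu; hence the consistency error of f is the frame energy
   of d, i.e. the integral of |d . z|^2 against nu, with d in W.
   (1) The upper frame bound of nu bounds this energy by B |d|^2 <= B eps^2 |f|^2.
   (2) Every w in W is reconstructed from its frame coefficients by the canonical oblique dual
   G = P S^+ (S the frame operator of nu, S^+ its Moore-Penrose inverse):
   w = P S^+ S w = integral of (y . w) G y d nu, because the part of w orthogonal to V is killed
   by both S and P.  Cauchy-Schwarz gives |d| <= (energy of d)^(1/2) M2(G # nu)^(1/2), and
   consistency bounds the energy by alpha^2 |f|^2. *)

section \<open>Outer products and the Moore-Penrose inverse\<close>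

lemma outer_mult_vector: "outer x y *v v = (y \<bullet> v) *\<^sub>R x"
  by (simp add: vec_eq_iff outer_def matrix_vector_mult_def inner_vec_def sum_distrib_left mult_ac)

lemma transpose_outer: "transpose (outer x y) = outer y x"
  by (simp add: vec_eq_iff outer_def transpose_def)

lemma norm_outer: "norm (outer x y) = norm x * norm y"
proof -
  have "outer x y $ i = x $ i *\<^sub>R y" for i
    by (simp add: vec_eq_iff outer_def)
  then have "norm (outer x y) = L2_set (\<lambda>i. \<bar>x $ i\<bar> * norm y) UNIV"
    by (simp add: norm_vec_def[of "outer x y"])
  also have "\<dots> = norm x * norm y"
    by (simp add: L2_set_left_distrib norm_vec_def[of x])
  finally show ?thesis .
qed

lemma inner_matrix_vector: "(A *v x) \<bullet> y = x \<bullet> (transpose A *v (y::real^'n))"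
  by (metis dot_lmul_matrix inner_commute transpose_matrix_vector)

lemma bounded_linear_matrix_vector_mult_left: "bounded_linear (\<lambda>A::real^'n^'m. A *v x)"
  by (rule bounded_linearI')
    (simp_all add: vec_eq_iff matrix_vector_mult_def sum_distrib_left mult.assoc distrib_right sum.distrib)

lemma bounded_linear_transpose: "bounded_linear (transpose :: real^'n^'m \<Rightarrow> real^'m^'n)"
  by (rule bounded_linearI') (simp_all add: vec_eq_iff transpose_def)

definition moore_penrose :: "real^'n^'n \<Rightarrow> real^'n^'n \<Rightarrow> bool" where
  "moore_penrose A X \<longleftrightarrow> A ** X ** A = A \<and> X ** A ** X = X \<and>
     transpose (A ** X) = A ** X \<and> transpose (X ** A) = X ** A"

lemma moore_penrose_unique:
  assumes "moore_penrose A X" "moore_penrose A Y" shows "X = Y"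
proof -
  have a1: "A ** X ** A = A" and a2: "X ** A ** X = X" and a3: "transpose (A ** X) = A ** X"
    and a4: "transpose (X ** A) = X ** A" using assms(1) unfolding moore_penrose_def by auto
  have b1: "A ** Y ** A = A" and b2: "Y ** A ** Y = Y" and b3: "transpose (A ** Y) = A ** Y"
    and b4: "transpose (Y ** A) = Y ** A" using assms(2) unfolding moore_penrose_def by auto
  have "X = X ** (transpose X ** transpose A)" using a2 a3 by (metis matrix_mul_assoc matrix_transpose_mul)
  also have "\<dots> = X ** (transpose (A ** X) ** transpose (A ** Y))"
    using b1 by (metis matrix_transpose_mul matrix_mul_assoc)
  also have "\<dots> = X ** A ** Y" using a2 a3 b3 by (simp add: matrix_mul_assoc)
  finally have x: "X = X ** A ** Y" .
  have "Y = transpose A ** transpose Y ** Y" using b2 b4 by (metis matrix_transpose_mul)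
  also have "\<dots> = transpose (X ** A) ** transpose (Y ** A) ** Y"
    using a1 by (metis matrix_transpose_mul matrix_mul_assoc)
  also have "\<dots> = X ** A ** Y ** A ** Y" using a4 b4 by (simp add: matrix_mul_assoc)
  also have "\<dots> = X ** A ** Y" by (metis b2 matrix_mul_assoc)
  finally show ?thesis using x by simp
qed

lemma orthogonal_projection_matrix:
  fixes K :: "(real^'n) set"
  assumes "subspace K"
  obtains Q :: "real^'n^'n"
  where "transpose Q = Q" "\<And>x. Q *v x \<in> K" "\<And>x. x \<in> K \<Longrightarrow> Q *v x = x"
    "\<And>x. (\<And>k. k \<in> K \<Longrightarrow> k \<bullet> x = 0) \<Longrightarrow> Q *v x = 0"
proof -
  obtain B where BK: "B \<subseteq> K" and orth: "pairwise orthogonal B"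
    and unit: "\<And>b. b \<in> B \<Longrightarrow> norm b = 1" and ind: "independent B" and spB: "span B = K"
    using assms by (rule orthonormal_basis_subspace) blast
  have finB: "finite B" using ind by (rule independent_imp_finite)
  define Q where "Q = (\<Sum>b\<in>B. outer b b)"
  have Qv: "Q *v x = (\<Sum>b\<in>B. (b \<bullet> x) *\<^sub>R b)" for x
    unfolding Q_def using finB
    by (induction B rule: finite_induct) (auto simp: matrix_vector_mult_add_rdistrib outer_mult_vector)
  have range: "Q *v x \<in> K" for x
    unfolding Qv spB[symmetric] by (intro span_sum span_scale span_base)
  have coeff: "b \<bullet> (Q *v x) = b \<bullet> x" if "b \<in> B" for b x
  proof -
    have "b \<bullet> (Q *v x) = (\<Sum>c\<in>B. if c = b then b \<bullet> x else 0)"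
      unfolding Qv inner_sum_right
    proof (rule sum.cong)
      fix c assume "c \<in> B"
      then show "b \<bullet> (c \<bullet> x) *\<^sub>R c = (if c = b then b \<bullet> x else 0)"
        using orth unit[OF that] that
        by (auto simp: pairwise_def orthogonal_def inner_commute norm_eq_1)
    qed simp
    then show ?thesis using that finB by (simp add: sum.delta')
  qed
  have "Q *v x = x" if "x \<in> K" for x
  proof -
    have "orthogonal (x - Q *v x) b" if "b \<in> B" for b
      using coeff[OF that, of x] by (simp add: orthogonal_def inner_diff_right inner_commute)
    moreover have "x - Q *v x \<in> span B" using that range spB by (metis span_diff span_superset subsetD)
    ultimately have "orthogonal (x - Q *v x) (x - Q *v x)" by (metis orthogonal_to_span)
    then show ?thesis by (simp add: orthogonal_def)
  qed
  moreover have "transpose Q = Q"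
    unfolding Q_def by (simp add: vec_eq_iff transpose_def outer_def sum_component mult.commute)
  moreover have "Q *v x = 0" if "\<And>k. k \<in> K \<Longrightarrow> k \<bullet> x = 0" for x
    using that BK unfolding Qv by (simp add: subset_iff)
  ultimately show thesis using that range by blast
qed

text \<open>For symmetric S the Moore-Penrose inverse is the inverse of S + Q minus Q,
  where Q is the orthogonal projection onto the kernel of S.\<close>

lemma moore_penrose_exists:
  fixes S :: "real^'n^'n"
  assumes symS: "transpose S = S"
  shows "\<exists>X. moore_penrose S X"
proof -
  have "subspace {x. S *v x = 0}"
    unfolding subspace_def by (auto simp: matrix_vector_right_distrib matrix_vector_mult_scaleR)
  then obtain Q :: "real^'n^'n" where symQ: "transpose Q = Q" and SQ: "\<And>x. S *v (Q *v x) = 0"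
    and Q_ker: "\<And>x. S *v x = 0 \<Longrightarrow> Q *v x = x"
    and Q_zero: "\<And>x. (\<And>k. S *v k = 0 \<Longrightarrow> k \<bullet> x = 0) \<Longrightarrow> Q *v x = 0"
    by (rule orthogonal_projection_matrix) auto
  have QS: "Q *v (S *v x) = 0" for x
    by (rule Q_zero) (metis inner_commute inner_matrix_vector symS inner_zero_right)
  have QQ: "Q *v (Q *v x) = Q *v x" for x by (rule Q_ker[OF SQ])
  define T where "T = S + Q"
  have Tv: "T *v x = S *v x + Q *v x" for x unfolding T_def by (simp add: matrix_vector_mult_add_rdistrib)
  have "x = 0" if "T *v x = 0" for x
  proof -
    have e: "S *v x = - (Q *v x)" using that unfolding Tv by (simp add: eq_neg_iff_add_eq_0)
    have "(Q *v x) \<bullet> (Q *v x) = - ((S *v x) \<bullet> (Q *v x))" by (simp add: e)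
    also have "\<dots> = - (x \<bullet> (S *v (Q *v x)))" by (simp add: inner_matrix_vector symS)
    finally have "Q *v x = 0" by (simp add: SQ)
    then have "S *v x = 0" using e by simp
    then show "x = 0" using Q_ker \<open>Q *v x = 0\<close> by simp
  qed
  then obtain T' where "T' ** T = mat 1" using matrix_left_invertible_ker by blast
  then have "T ** T' = mat 1" using matrix_left_right_inverse by blast
  have T'T: "T' *v (T *v y) = y" for y using \<open>T' ** T = mat 1\<close> by (simp add: matrix_vector_mul_assoc)
  have ST': "S *v (T' *v x) = x - Q *v (T' *v x)" for x
    using \<open>T ** T' = mat 1\<close> Tv[of "T' *v x"] by (simp add: matrix_vector_mul_assoc eq_diff_eq)
  have QT': "Q *v (T' *v x) = Q *v x" for x
    using arg_cong[OF ST'[of x], of "(*v) Q"] by (simp add: matrix_vector_mult_diff_distrib QS QQ)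
  have T'Q: "T' *v (Q *v x) = Q *v x" for x
    using T'T[of "Q *v x"] by (simp add: Tv SQ QQ)
  define X where "X = T' - Q"
  have Xv: "X *v x = T' *v x - Q *v x" for x
    unfolding X_def by (simp add: matrix_vector_mult_diff_rdistrib)
  have SX: "S ** X = mat 1 - Q"
    by (simp add: matrix_eq matrix_vector_mul_assoc[symmetric] Xv matrix_vector_mult_diff_distrib
        matrix_vector_mult_diff_rdistrib ST' QT' SQ)
  have XS: "X ** S = mat 1 - Q"
  proof -
    have "T' *v (S *v x) = x - Q *v x" for x
      using T'T[of x] T'Q[of x] by (simp add: Tv matrix_vector_right_distrib eq_diff_eq)
    then show ?thesis
      by (simp add: matrix_eq matrix_vector_mul_assoc[symmetric] Xv QS matrix_vector_mult_diff_rdistrib)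
  qed
  have "transpose (mat 1 - Q) = mat 1 - Q"
    using symQ by (simp add: vec_eq_iff transpose_def mat_def)
  moreover have "S ** X ** S = S"
    by (simp add: matrix_eq SX matrix_vector_mul_assoc[symmetric] matrix_vector_mult_diff_rdistrib QS)
  moreover have "X ** S ** X = X"
    by (simp add: matrix_eq XS matrix_vector_mul_assoc[symmetric] matrix_vector_mult_diff_rdistrib Xv
        matrix_vector_mult_diff_distrib QT' QQ)
  ultimately show ?thesis unfolding moore_penrose_def using SX XS by metis
qed

lemma moore_penrose_mp_inverse:
  assumes "transpose S = S" shows "moore_penrose S (mp_inverse S)"
proof -
  have "\<exists>!X. moore_penrose S X" using moore_penrose_exists[OF assms] moore_penrose_unique by blast
  then show ?thesis unfolding mp_inverse_def moore_penrose_def[symmetric] by (rule theI')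
qed

lemma mp_inverse_mult_cancel:
  fixes S :: "real^'n^'n"
  assumes symS: "transpose S = S" and ker: "\<And>k. S *v k = 0 \<Longrightarrow> k \<bullet> h = 0"
  shows "mp_inverse S *v (S *v h) = h"
proof -
  define p where "p = mp_inverse S ** S"
  have "moore_penrose S (mp_inverse S)" by (rule moore_penrose_mp_inverse[OF symS])
  then have pp: "p *v (p *v x) = p *v x" and Sp: "S *v (p *v x) = S *v x" and pT: "transpose p = p" for x
    unfolding moore_penrose_def p_def by (simp_all add: matrix_vector_mul_assoc matrix_mul_assoc)
  define k where "k = h - p *v h"
  have "S *v k = 0" unfolding k_def by (simp add: matrix_vector_mult_diff_distrib Sp)
  then have "k \<bullet> h = 0" by (rule ker)
  moreover have "(p *v h) \<bullet> k = 0"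
    by (simp add: inner_matrix_vector pT k_def matrix_vector_mult_diff_distrib pp)
  ultimately have "k \<bullet> k = 0" by (simp add: k_def inner_diff_left inner_commute)
  then show ?thesis unfolding k_def p_def by (simp add: matrix_vector_mul_assoc)
qed

section \<open>Integrals against measures with finite second moment\<close>

lemma borel_measurable_continuous_on_sets:
  assumes "sets M = sets borel" "continuous_on UNIV f"
  shows "f \<in> borel_measurable M"
  by (subst measurable_cong_sets[OF assms(1) refl]) (rule borel_measurable_continuous_onI[OF assms(2)])

lemma integrable_quadratic_growth:
  fixes F :: "'a::real_normed_vector \<Rightarrow> 'b::{banach,second_countable_topology}"
  assumes "sets M = sets borel" "integrable M (\<lambda>x. (norm x)^2)"
    and "continuous_on UNIV F" "\<And>x. norm (F x) \<le> K * (norm x)^2"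
  shows "integrable M F"
proof (rule Bochner_Integration.integrable_bound[OF integrable_mult_right[OF assms(2), of K]])
  show "F \<in> borel_measurable M" by (rule borel_measurable_continuous_on_sets[OF assms(1,3)])
  show "AE x in M. norm (F x) \<le> norm (K * (norm x)^2)"
  proof (intro AE_I2)
    fix x
    show "norm (F x) \<le> norm (K * (norm x)^2)"
      using assms(4)[of x] abs_ge_self[of "K * (norm x)^2"] by simp
  qed
qed

lemma le_sqrt_mult_if_quadratic_nonneg:
  fixes a b c :: real
  assumes q: "\<And>t. 0 \<le> t^2 * a - 2 * t * c + b" and "0 \<le> a" "0 \<le> b"
  shows "c \<le> sqrt a * sqrt b"
proof (cases "c \<le> 0")
  case True
  have "0 \<le> sqrt a * sqrt b" using assms(2,3) by simp
  then show ?thesis using True by linarith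
next
  case False
  have "c^2 \<le> a * b"
  proof (cases "a = 0")
    case True
    show ?thesis using q[of "(b + 1) / (2 * c)"] True False by (simp add: field_simps)
  next
    case False
    then have "a > 0" using \<open>0 \<le> a\<close> by simp
    then show ?thesis using q[of "c / a"] by (simp add: field_simps power2_eq_square)
  qed
  then have "c \<le> sqrt (a * b)" by (rule real_le_rsqrt)
  then show ?thesis by (simp add: real_sqrt_mult)
qed

lemma Cauchy_Schwarz_integral:
  fixes a b :: "'a \<Rightarrow> real"
  assumes "integrable M (\<lambda>x. (a x)^2)" "integrable M (\<lambda>x. (b x)^2)" "integrable M (\<lambda>x. a x * b x)"
  shows "(\<integral>x. a x * b x \<partial>M) \<le> sqrt (\<integral>x. (a x)^2 \<partial>M) * sqrt (\<integral>x. (b x)^2 \<partial>M)"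
proof (rule le_sqrt_mult_if_quadratic_nonneg)
  fix t :: real
  have "0 \<le> (\<integral>x. (t * a x - b x)^2 \<partial>M)" by simp
  also have "\<dots> = (\<integral>x. t^2 * (a x)^2 - 2 * t * (a x * b x) + (b x)^2 \<partial>M)"
    by (rule Bochner_Integration.integral_cong) (auto simp: power2_eq_square algebra_simps)
  also have "\<dots> = t^2 * (\<integral>x. (a x)^2 \<partial>M) - 2 * t * (\<integral>x. a x * b x \<partial>M) + (\<integral>x. (b x)^2 \<partial>M)"
    using assms by simp
  finally show "0 \<le> t^2 * (\<integral>x. (a x)^2 \<partial>M) - 2 * t * (\<integral>x. a x * b x \<partial>M) + (\<integral>x. (b x)^2 \<partial>M)" .
qed simp_all

lemma P2D:
  assumes "\<eta> \<in> P2 S"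
  shows "sets \<eta> = sets borel" "AE x in \<eta>. x \<in> S" "integrable \<eta> (\<lambda>x. (norm x)^2)"
  using assms unfolding P2_def by auto

lemma couplingsD:
  assumes "\<gamma> \<in> couplings \<mu> \<nu>"
  shows "sets \<gamma> = sets borel" "distr \<gamma> borel fst = \<mu>" "distr \<gamma> borel snd = \<nu>"
    "fst \<in> borel_measurable \<gamma>" "snd \<in> borel_measurable \<gamma>"
proof -
  have s: "sets \<gamma> = sets (borel \<Otimes>\<^sub>M borel)" using assms unfolding couplings_def by auto
  then show "sets \<gamma> = sets borel" by (metis borel_prod)
  show "distr \<gamma> borel fst = \<mu>" "distr \<gamma> borel snd = \<nu>" using assms unfolding couplings_def by auto
  show "fst \<in> borel_measurable \<gamma>" "snd \<in> borel_measurable \<gamma>" using measurable_cong_sets[OF s refl] by auto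
qed

lemma integrable_coupling_norm_sq:
  fixes \<gamma> :: "((real^'n) \<times> (real^'n)) measure"
  assumes \<gamma>: "\<gamma> \<in> couplings \<mu> \<nu>" and "\<mu> \<in> P2 W" "\<nu> \<in> P2 V"
  shows "integrable \<gamma> (\<lambda>p. (norm p)^2)"
proof -
  have "integrable \<gamma> (\<lambda>p. (norm (fst p))^2)"
    using integrable_distr_eq[OF couplingsD(4)[OF \<gamma>], of "\<lambda>x. (norm x)^2"] P2D(3)[OF assms(2)]
    by (simp add: couplingsD(2)[OF \<gamma>])
  moreover have "integrable \<gamma> (\<lambda>p. (norm (snd p))^2)"
    using integrable_distr_eq[OF couplingsD(5)[OF \<gamma>], of "\<lambda>x. (norm x)^2"] P2D(3)[OF assms(3)]
    by (simp add: couplingsD(3)[OF \<gamma>])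
  ultimately have "integrable \<gamma> (\<lambda>p. (norm (fst p))^2 + (norm (snd p))^2)" by simp
  then show ?thesis by (simp add: norm_prod_def)
qed

lemma AE_coupling_fst_in:
  assumes \<gamma>: "\<gamma> \<in> couplings \<mu> \<nu>" and "\<mu> \<in> P2 W" "closed W"
  shows "AE p in \<gamma>. fst p \<in> W"
proof -
  have "AE x in distr \<gamma> borel fst. x \<in> W" unfolding couplingsD(2)[OF \<gamma>] by (rule P2D(2)[OF assms(2)])
  then show ?thesis using assms(3) by (subst (asm) AE_distr_iff[OF couplingsD(4)[OF \<gamma>]]) auto
qed

section \<open>Frame and cross operators\<close>

lemma integrable_outer_self:
  assumes "\<eta> \<in> P2 S"
  shows "integrable \<eta> (\<lambda>y. outer y y)"
proof (rule integrable_quadratic_growth[OF P2D(1,3)[OF assms]])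
  show "continuous_on UNIV (\<lambda>y. outer y y)" unfolding outer_def by (intro continuous_intros)
  show "norm (outer y y) \<le> 1 * (norm y)^2" for y by (simp add: norm_outer power2_eq_square)
qed

lemma integrable_inner_scaleR_self:
  assumes "\<eta> \<in> P2 S"
  shows "integrable \<eta> (\<lambda>y. (y \<bullet> h) *\<^sub>R y)"
  using integrable_bounded_linear[OF bounded_linear_matrix_vector_mult_left integrable_outer_self[OF assms]]
  by (simp add: outer_mult_vector)

lemma integrable_inner_sq:
  assumes "\<eta> \<in> P2 S"
  shows "integrable \<eta> (\<lambda>y. \<bar>x \<bullet> y\<bar>^2)"
proof (rule integrable_quadratic_growth[OF P2D(1,3)[OF assms]])
  show "continuous_on UNIV (\<lambda>y. \<bar>x \<bullet> y\<bar>^2)" by (intro continuous_intros)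
  show "norm (\<bar>x \<bullet> y\<bar>^2) \<le> (norm x)^2 * (norm y)^2" for y
    using power_mono[OF Cauchy_Schwarz_ineq2[of x y], of 2] by (simp add: power_mult_distrib)
qed

lemma frame_op_mult_vector:
  assumes "\<eta> \<in> P2 S"
  shows "frame_op \<eta> *v h = (\<integral>y. (y \<bullet> h) *\<^sub>R y \<partial>\<eta>)"
proof -
  have "frame_op \<eta> *v h = (\<integral>y. outer y y *v h \<partial>\<eta>)"
    unfolding frame_op_def
    by (rule integral_bounded_linear[OF bounded_linear_matrix_vector_mult_left integrable_outer_self[OF assms], symmetric])
  then show ?thesis by (simp add: outer_mult_vector)
qed

lemma transpose_frame_op:
  assumes "\<eta> \<in> P2 S"
  shows "transpose (frame_op \<eta>) = frame_op \<eta>"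
proof -
  have "transpose (frame_op \<eta>) = (\<integral>y. transpose (outer y y) \<partial>\<eta>)"
    unfolding frame_op_def
    by (rule integral_bounded_linear[OF bounded_linear_transpose integrable_outer_self[OF assms], symmetric])
  then show ?thesis by (simp add: transpose_outer frame_op_def)
qed

lemma inner_frame_op:
  assumes "\<eta> \<in> P2 S"
  shows "x \<bullet> (frame_op \<eta> *v x) = (\<integral>y. \<bar>x \<bullet> y\<bar>^2 \<partial>\<eta>)"
proof -
  have "x \<bullet> (frame_op \<eta> *v x) = (\<integral>y. x \<bullet> ((y \<bullet> x) *\<^sub>R y) \<partial>\<eta>)"
    unfolding frame_op_mult_vector[OF assms]
    by (rule integral_bounded_linear[OF bounded_linear_inner_right integrable_inner_scaleR_self[OF assms], symmetric])
  then show ?thesis by (simp add: inner_commute power2_eq_square)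
qed

lemma orthogonal_comp_decomposition:
  fixes V :: "'a::euclidean_space set"
  assumes "subspace V"
  obtains v u where "v \<in> V" "u \<in> orthogonal_comp V" "x = v + u"
  using subspace_sum_orthogonal_comp[OF assms] by (metis UNIV_I set_plus_elim)

lemma integral_inner_sq_add_orthogonal_comp:
  assumes "\<nu> \<in> P2 V" "u \<in> orthogonal_comp V"
  shows "(\<integral>z. \<bar>(x + u) \<bullet> z\<bar>^2 \<partial>\<nu>) = (\<integral>z. \<bar>x \<bullet> z\<bar>^2 \<partial>\<nu>)"
proof (rule integral_cong_AE)
  show "AE z in \<nu>. \<bar>(x + u) \<bullet> z\<bar>^2 = \<bar>x \<bullet> z\<bar>^2"
    using P2D(2)[OF assms(1)] by eventually_elim
      (use assms(2) in \<open>auto simp: orthogonal_comp_def orthogonal_def inner_add_left inner_add_right inner_commute\<close>)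
qed (auto intro!: borel_measurable_continuous_on_sets[OF P2D(1)[OF assms(1)]] continuous_intros)

lemma prob_frame_upper_bound:
  assumes "prob_frame \<nu> V A B" "subspace V"
  shows "(\<integral>z. \<bar>x \<bullet> z\<bar>^2 \<partial>\<nu>) \<le> B * (norm x)^2"
proof -
  have P: "\<nu> \<in> P2 V" "0 \<le> B"
    and upper: "\<And>v. v \<in> V \<Longrightarrow> (\<integral>z. \<bar>v \<bullet> z\<bar>^2 \<partial>\<nu>) \<le> B * (norm v)^2"
    using assms(1) unfolding prob_frame_def by auto
  obtain v u where v: "v \<in> V" and u: "u \<in> orthogonal_comp V" and x: "x = v + u"
    by (rule orthogonal_comp_decomposition[OF assms(2)])
  have "(\<integral>z. \<bar>x \<bullet> z\<bar>^2 \<partial>\<nu>) = (\<integral>z. \<bar>v \<bullet> z\<bar>^2 \<partial>\<nu>)"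
    unfolding x by (rule integral_inner_sq_add_orthogonal_comp[OF P(1) u])
  also have "\<dots> \<le> B * (norm v)^2" by (rule upper[OF v])
  also have "\<dots> \<le> B * (norm x)^2"
  proof -
    have "(norm x)^2 = (norm v)^2 + (norm u)^2"
      unfolding x using u v by (intro norm_add_Pythagorean) (simp add: orthogonal_comp_def)
    then show ?thesis using P(2) by (intro mult_left_mono) auto
  qed
  finally show ?thesis .
qed

lemma frame_op_orthogonal_comp:
  assumes "\<nu> \<in> P2 V" "u \<in> orthogonal_comp V"
  shows "frame_op \<nu> *v u = 0"
proof -
  have "frame_op \<nu> *v u = (\<integral>y. (y \<bullet> u) *\<^sub>R y \<partial>\<nu>)" by (rule frame_op_mult_vector[OF assms(1)])
  also have "\<dots> = (\<integral>y. 0 \<partial>\<nu>)"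
  proof (rule integral_cong_AE)
    show "AE y in \<nu>. (y \<bullet> u) *\<^sub>R y = 0"
      using P2D(2)[OF assms(1)] by eventually_elim
        (use assms(2) in \<open>auto simp: orthogonal_comp_def orthogonal_def inner_commute\<close>)
  qed (auto intro!: borel_measurable_continuous_on_sets[OF P2D(1)[OF assms(1)]] continuous_intros)
  finally show ?thesis by simp
qed

lemma frame_op_kernel:
  assumes "prob_frame \<nu> V A B" "subspace V" "frame_op \<nu> *v k = 0"
  shows "k \<in> orthogonal_comp V"
proof -
  have P: "\<nu> \<in> P2 V" "0 < A"
    and lower: "\<And>v. v \<in> V \<Longrightarrow> A * (norm v)^2 \<le> (\<integral>z. \<bar>v \<bullet> z\<bar>^2 \<partial>\<nu>)"
    using assms(1) unfolding prob_frame_def by auto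
  obtain v u where v: "v \<in> V" and u: "u \<in> orthogonal_comp V" and k: "k = v + u"
    by (rule orthogonal_comp_decomposition[OF assms(2)])
  have "A * (norm v)^2 \<le> (\<integral>z. \<bar>v \<bullet> z\<bar>^2 \<partial>\<nu>)" by (rule lower[OF v])
  also have "\<dots> = (\<integral>z. \<bar>k \<bullet> z\<bar>^2 \<partial>\<nu>)"
    unfolding k by (rule integral_inner_sq_add_orthogonal_comp[OF P(1) u, symmetric])
  also have "\<dots> = k \<bullet> (frame_op \<nu> *v k)" by (rule inner_frame_op[OF P(1), symmetric])
  finally have "A * (norm v)^2 \<le> 0" using assms(3) by simp
  then have "v = 0" using P(2) by (simp add: mult_le_0_iff)
  then show ?thesis using u k by simp
qed

lemma mp_inverse_frame_op_cancel:
  assumes "prob_frame \<nu> V A B" "subspace V" "v \<in> V"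
  shows "mp_inverse (frame_op \<nu>) *v (frame_op \<nu> *v v) = v"
proof (rule mp_inverse_mult_cancel)
  have "\<nu> \<in> P2 V" using assms(1) unfolding prob_frame_def by auto
  then show "transpose (frame_op \<nu>) = frame_op \<nu>" by (rule transpose_frame_op)
  fix k assume "frame_op \<nu> *v k = 0"
  then have "k \<in> orthogonal_comp V" by (rule frame_op_kernel[OF assms(1,2)])
  then show "k \<bullet> v = 0" using assms(3) by (auto simp: orthogonal_comp_def orthogonal_def inner_commute)
qed

lemma integrable_outer_coupling:
  assumes "\<gamma> \<in> couplings \<mu> \<nu>" "\<mu> \<in> P2 W" "\<nu> \<in> P2 V"
  shows "integrable \<gamma> (\<lambda>p. outer (fst p) (snd p))"
proof (rule integrable_quadratic_growth[OF couplingsD(1)[OF assms(1)] integrable_coupling_norm_sq[OF assms]])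
  show "continuous_on UNIV (\<lambda>p. outer (fst p) (snd p))" unfolding outer_def by (intro continuous_intros)
  show "norm (outer (fst p) (snd p)) \<le> 1 * (norm p)^2" for p
    using mult_mono[OF norm_fst_le[of "fst p" "snd p"] norm_snd_le[of "snd p" "fst p"]]
    by (simp add: norm_outer power2_eq_square)
qed

lemma cross_op_mult_vector:
  assumes "\<gamma> \<in> couplings \<mu> \<nu>" "\<mu> \<in> P2 W" "\<nu> \<in> P2 V"
  shows "cross_op \<gamma> *v f = reconstr \<gamma> f"
proof -
  have "cross_op \<gamma> *v f = (\<integral>p. outer (fst p) (snd p) *v f \<partial>\<gamma>)"
    unfolding cross_op_def
    by (rule integral_bounded_linear[OF bounded_linear_matrix_vector_mult_left integrable_outer_coupling[OF assms], symmetric])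
  then show ?thesis by (simp add: outer_mult_vector reconstr_def)
qed

section \<open>Oblique projections and the two directions\<close>

locale complementary_subspaces =
  fixes W U :: "(real^'n) set"
  assumes subspace_W: "subspace W" and subspace_U: "subspace U"
    and inter_eq_0: "W \<inter> U = {0}" and sum_eq_UNIV: "\<forall>x. \<exists>w\<in>W. \<exists>u\<in>U. x = w + u"
begin

lemma oblique_proj_eqI:
  assumes "w \<in> W" "x - w \<in> U"
  shows "oblique_proj W U x = w"
  unfolding oblique_proj_def
proof (rule the_equality)
  show "w \<in> W \<and> x - w \<in> U" using assms by simp
  fix w' assume w': "w' \<in> W \<and> x - w' \<in> U"
  have "w' - w \<in> W" using subspace_diff[OF subspace_W, of w' w] w' assms(1) by simp
  moreover have "w' - w \<in> U" using subspace_diff[OF subspace_U, of "x - w" "x - w'"] w' assms(2) by simp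
  ultimately have "w' - w \<in> W \<inter> U" by (rule IntI)
  then show "w' = w" unfolding inter_eq_0 by simp
qed

lemma
  shows oblique_proj_in: "oblique_proj W U x \<in> W"
    and oblique_proj_diff_in: "x - oblique_proj W U x \<in> U"
proof -
  obtain w u where w: "w \<in> W" and u: "u \<in> U" and x: "x = w + u" using sum_eq_UNIV by blast
  have "oblique_proj W U x = w" by (rule oblique_proj_eqI) (use w u x in simp_all)
  then show "oblique_proj W U x \<in> W" "x - oblique_proj W U x \<in> U" using w u x by simp_all
qed

lemma oblique_proj_id: "w \<in> W \<Longrightarrow> oblique_proj W U w = w"
  by (rule oblique_proj_eqI) (simp_all add: subspace_0[OF subspace_U])

lemma oblique_proj_eq_0: "u \<in> U \<Longrightarrow> oblique_proj W U u = 0"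
  by (rule oblique_proj_eqI) (simp_all add: subspace_0[OF subspace_W])

lemma linear_oblique_proj: "linear (oblique_proj W U)"
proof (rule linearI)
  fix x y and c :: real
  show "oblique_proj W U (x + y) = oblique_proj W U x + oblique_proj W U y"
  proof (rule oblique_proj_eqI)
    show "oblique_proj W U x + oblique_proj W U y \<in> W"
      by (intro subspace_add[OF subspace_W] oblique_proj_in)
    show "x + y - (oblique_proj W U x + oblique_proj W U y) \<in> U"
      unfolding add_diff_add by (intro subspace_add[OF subspace_U] oblique_proj_diff_in)
  qed
  show "oblique_proj W U (c *\<^sub>R x) = c *\<^sub>R oblique_proj W U x"
  proof (rule oblique_proj_eqI)
    show "c *\<^sub>R oblique_proj W U x \<in> W" by (intro subspace_mul[OF subspace_W] oblique_proj_in)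
    show "c *\<^sub>R x - c *\<^sub>R oblique_proj W U x \<in> U"
      unfolding scaleR_diff_right[symmetric] by (intro subspace_mul[OF subspace_U] oblique_proj_diff_in)
  qed
qed

lemma bounded_linear_oblique_proj: "bounded_linear (oblique_proj W U)"
  using linear_oblique_proj by (simp add: linear_conv_bounded_linear)

lemma continuous_on_oblique_proj [continuous_intros]:
  "continuous_on S f \<Longrightarrow> continuous_on S (\<lambda>x. oblique_proj W U (f x))"
  by (rule bounded_linear.continuous_on[OF bounded_linear_oblique_proj])

lemma matrix_oblique_proj: "matrix (oblique_proj W U) *v x = oblique_proj W U x"
  using fun_cong[OF matrix_vector_mul(2)[OF linear_oblique_proj]] by simp

end

locale oblique_frame_pair = complementary_subspaces W "orthogonal_comp V"
  for W V :: "(real^'n) set" +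
  fixes \<mu> \<nu> :: "(real^'n) measure" and A B :: real
  assumes subspace_V: "subspace V" and P2_\<mu>: "\<mu> \<in> P2 W" and frame_\<nu>: "prob_frame \<nu> V A B"
begin

abbreviation proj :: "real^'n \<Rightarrow> real^'n" where
  "proj \<equiv> oblique_proj W (orthogonal_comp V)"

lemma P2_\<nu>: "\<nu> \<in> P2 V"
  using frame_\<nu> unfolding prob_frame_def by auto

lemma reconstr_in_W:
  assumes \<gamma>: "\<gamma> \<in> couplings \<mu> \<nu>"
  shows "reconstr \<gamma> f \<in> W"
proof -
  have "integrable \<gamma> (\<lambda>p. (snd p \<bullet> f) *\<^sub>R fst p)"
    using integrable_bounded_linear[OF bounded_linear_matrix_vector_mult_left
        integrable_outer_coupling[OF \<gamma> P2_\<mu> P2_\<nu>], of f]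
    by (simp add: outer_mult_vector)
  then have "proj (reconstr \<gamma> f) = (\<integral>p. proj ((snd p \<bullet> f) *\<^sub>R fst p) \<partial>\<gamma>)"
    unfolding reconstr_def by (rule integral_bounded_linear[OF bounded_linear_oblique_proj, symmetric])
  also have "\<dots> = reconstr \<gamma> f"
    unfolding reconstr_def
  proof (rule integral_cong_AE)
    show "AE p in \<gamma>. proj ((snd p \<bullet> f) *\<^sub>R fst p) = (snd p \<bullet> f) *\<^sub>R fst p"
      using AE_coupling_fst_in[OF \<gamma> P2_\<mu> closed_subspace[OF subspace_W]]
      by eventually_elim (simp add: oblique_proj_id subspace_mul[OF subspace_W])
  qed (intro borel_measurable_continuous_on_sets[OF couplingsD(1)[OF \<gamma>]] continuous_intros)+
  finally show ?thesis using oblique_proj_in[of "reconstr \<gamma> f"] by simp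
qed

lemma cross_op_error:
  assumes "\<gamma> \<in> couplings \<mu> \<nu>"
  shows "(cross_op \<gamma> - matrix proj) *v f = reconstr \<gamma> f - proj f"
  by (simp add: matrix_vector_mult_diff_rdistrib matrix_oblique_proj cross_op_mult_vector[OF assms P2_\<mu> P2_\<nu>])

lemma cross_op_error_in_W:
  assumes "\<gamma> \<in> couplings \<mu> \<nu>"
  shows "(cross_op \<gamma> - matrix proj) *v f \<in> W"
  unfolding cross_op_error[OF assms]
  by (intro subspace_diff[OF subspace_W] reconstr_in_W[OF assms] oblique_proj_in)

lemma consistency_error_eq:
  assumes "\<gamma> \<in> couplings \<mu> \<nu>"
  shows "(\<integral>z. \<bar>(f - reconstr \<gamma> f) \<bullet> z\<bar>^2 \<partial>\<nu>)
       = (\<integral>z. \<bar>((cross_op \<gamma> - matrix proj) *v f) \<bullet> z\<bar>^2 \<partial>\<nu>)"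
proof -
  define d where "d = (cross_op \<gamma> - matrix proj) *v f"
  have "f - reconstr \<gamma> f = - d + (f - proj f)"
    by (simp add: d_def cross_op_error[OF assms])
  then have "(\<integral>z. \<bar>(f - reconstr \<gamma> f) \<bullet> z\<bar>^2 \<partial>\<nu>) = (\<integral>z. \<bar>(- d + (f - proj f)) \<bullet> z\<bar>^2 \<partial>\<nu>)"
    by (simp only:)
  also have "\<dots> = (\<integral>z. \<bar>(- d) \<bullet> z\<bar>^2 \<partial>\<nu>)"
    by (rule integral_inner_sq_add_orthogonal_comp[OF P2_\<nu> oblique_proj_diff_in])
  finally show ?thesis unfolding d_def by simp
qed

lemma consistent_reconstruction_if_oblique_approx_dual:
  assumes "oblique_approx_dual \<epsilon> \<nu> \<mu> W V"
  shows "consistent_reconstruction (sqrt B * \<epsilon>) \<mu> \<nu>"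
proof -
  obtain \<gamma> where "0 \<le> \<epsilon>" and \<gamma>: "\<gamma> \<in> couplings \<mu> \<nu>"
    and dual: "onorm (\<lambda>v. (cross_op \<gamma> - matrix proj) *v v) \<le> \<epsilon>"
    using assms unfolding oblique_approx_dual_def by blast
  have "0 \<le> B" using frame_\<nu> unfolding prob_frame_def by auto
  have "sqrt (\<integral>z. \<bar>(f - reconstr \<gamma> f) \<bullet> z\<bar>^2 \<partial>\<nu>) \<le> sqrt B * \<epsilon> * norm f" for f
  proof -
    define d where "d = (cross_op \<gamma> - matrix proj) *v f"
    have "norm d \<le> onorm (\<lambda>v. (cross_op \<gamma> - matrix proj) *v v) * norm f"
      unfolding d_def by (rule onorm[OF matrix_vector_mul_bounded_linear])
    also have "\<dots> \<le> \<epsilon> * norm f" by (rule mult_right_mono[OF dual norm_ge_zero])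
    finally have "norm d \<le> \<epsilon> * norm f" .
    have "(\<integral>z. \<bar>(f - reconstr \<gamma> f) \<bullet> z\<bar>^2 \<partial>\<nu>) \<le> B * (norm d)^2"
      unfolding consistency_error_eq[OF \<gamma>] d_def[symmetric]
      by (rule prob_frame_upper_bound[OF frame_\<nu> subspace_V])
    also have "\<dots> \<le> B * (\<epsilon> * norm f)^2"
      using \<open>norm d \<le> \<epsilon> * norm f\<close> \<open>0 \<le> B\<close> by (intro mult_left_mono power_mono) auto
    finally have "sqrt (\<integral>z. \<bar>(f - reconstr \<gamma> f) \<bullet> z\<bar>^2 \<partial>\<nu>) \<le> sqrt (B * (\<epsilon> * norm f)^2)"
      by (rule real_sqrt_le_mono)
    then show ?thesis using \<open>0 \<le> \<epsilon>\<close> by (simp add: real_sqrt_mult mult.assoc)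
  qed
  then show ?thesis
    unfolding consistent_reconstruction_def using \<open>0 \<le> B\<close> \<open>0 \<le> \<epsilon>\<close> \<gamma> by auto
qed

lemma oblique_proj_mp_inverse_frame_op:
  "proj (mp_inverse (frame_op \<nu>) *v (frame_op \<nu> *v x)) = proj x"
proof -
  obtain v u where v: "v \<in> V" and u: "u \<in> orthogonal_comp V" and x: "x = v + u"
    by (rule orthogonal_comp_decomposition[OF subspace_V])
  have "mp_inverse (frame_op \<nu>) *v (frame_op \<nu> *v x) = v"
    unfolding x matrix_vector_right_distrib frame_op_orthogonal_comp[OF P2_\<nu> u]
    by (simp add: mp_inverse_frame_op_cancel[OF frame_\<nu> subspace_V v])
  also have "proj v = proj x"
    unfolding x linear_add[OF linear_oblique_proj] oblique_proj_eq_0[OF u] by simp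
  finally show ?thesis .
qed

lemma norm_le_frame_coefficients:
  assumes "w \<in> W"
  shows "norm w \<le> sqrt (\<integral>y. \<bar>w \<bullet> y\<bar>^2 \<partial>\<nu>)
                  * sqrt (M2 (distr \<nu> borel (\<lambda>y. proj (mp_inverse (frame_op \<nu>) *v y))))"
proof -
  define G where "G = (\<lambda>y. proj (mp_inverse (frame_op \<nu>) *v y))"
  have "bounded_linear G"
    unfolding G_def by (intro bounded_linear_compose[OF bounded_linear_oblique_proj] matrix_vector_mul_bounded_linear)
  then obtain K where K: "\<And>x. norm (G x) \<le> norm x * K" using bounded_linear.bounded by blast
  have "continuous_on UNIV G" unfolding G_def by (intro continuous_intros)
  note growth = integrable_quadratic_growth[OF P2D(1,3)[OF P2_\<nu>]]
  have "w = G (frame_op \<nu> *v w)"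
    unfolding G_def oblique_proj_mp_inverse_frame_op using oblique_proj_id[OF assms] by simp
  also have "\<dots> = (\<integral>y. G ((y \<bullet> w) *\<^sub>R y) \<partial>\<nu>)"
    unfolding frame_op_mult_vector[OF P2_\<nu>]
    by (rule integral_bounded_linear[OF \<open>bounded_linear G\<close> integrable_inner_scaleR_self[OF P2_\<nu>], symmetric])
  finally have "norm w \<le> (\<integral>y. norm (G ((y \<bullet> w) *\<^sub>R y)) \<partial>\<nu>)"
    by (metis integral_norm_bound)
  also have "\<dots> = (\<integral>y. \<bar>w \<bullet> y\<bar> * norm (G y) \<partial>\<nu>)"
    by (simp add: linear_scale[OF bounded_linear.linear[OF \<open>bounded_linear G\<close>]] inner_commute)
  also have "\<dots> \<le> sqrt (\<integral>y. \<bar>w \<bullet> y\<bar>^2 \<partial>\<nu>) * sqrt (\<integral>y. (norm (G y))^2 \<partial>\<nu>)"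
  proof (rule Cauchy_Schwarz_integral)
    show "integrable \<nu> (\<lambda>y. \<bar>w \<bullet> y\<bar>^2)" by (rule integrable_inner_sq[OF P2_\<nu>])
    show "integrable \<nu> (\<lambda>y. (norm (G y))^2)"
    proof (rule growth)
      show "norm ((norm (G y))^2) \<le> K^2 * (norm y)^2" for y
        using power_mono[OF K[of y], of 2] by (simp add: power_mult_distrib mult.commute)
    qed (intro continuous_intros \<open>continuous_on UNIV G\<close>)
    show "integrable \<nu> (\<lambda>y. \<bar>w \<bullet> y\<bar> * norm (G y))"
    proof (rule growth)
      show "norm (\<bar>w \<bullet> y\<bar> * norm (G y)) \<le> (norm w * K) * (norm y)^2" for y
        using mult_mono[OF Cauchy_Schwarz_ineq2[of w y] K[of y]] by (simp add: power2_eq_square mult_ac)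
    qed (intro continuous_intros \<open>continuous_on UNIV G\<close>)
  qed
  also have "(\<integral>y. (norm (G y))^2 \<partial>\<nu>) = M2 (distr \<nu> borel G)"
    unfolding M2_def
    by (rule integral_distr[symmetric])
      (auto intro: borel_measurable_continuous_on_sets[OF P2D(1)[OF P2_\<nu>] \<open>continuous_on UNIV G\<close>])
  finally show ?thesis unfolding G_def .
qed

lemma oblique_approx_dual_if_consistent_reconstruction:
  assumes "consistent_reconstruction \<alpha> \<mu> \<nu>"
  shows "oblique_approx_dual
           (\<alpha> * sqrt (M2 (distr \<nu> borel (\<lambda>y. proj (mp_inverse (frame_op \<nu>) *v y))))) \<nu> \<mu> W V"
proof -
  obtain \<gamma> where "0 \<le> \<alpha>" and \<gamma>: "\<gamma> \<in> couplings \<mu> \<nu>"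
    and consistent: "\<And>f. sqrt (\<integral>z. \<bar>(f - reconstr \<gamma> f) \<bullet> z\<bar>^2 \<partial>\<nu>) \<le> \<alpha> * norm f"
    using assms unfolding consistent_reconstruction_def by blast
  define M where "M = M2 (distr \<nu> borel (\<lambda>y. proj (mp_inverse (frame_op \<nu>) *v y)))"
  have "0 \<le> M" unfolding M_def M2_def by (rule Bochner_Integration.integral_nonneg) simp
  have "norm ((cross_op \<gamma> - matrix proj) *v f) \<le> \<alpha> * sqrt M * norm f" for f
  proof -
    define d where "d = (cross_op \<gamma> - matrix proj) *v f"
    have "norm d \<le> sqrt (\<integral>z. \<bar>d \<bullet> z\<bar>^2 \<partial>\<nu>) * sqrt M"
      unfolding M_def d_def by (rule norm_le_frame_coefficients[OF cross_op_error_in_W[OF \<gamma>]])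
    also have "\<dots> \<le> \<alpha> * norm f * sqrt M"
      using consistent[of f] unfolding consistency_error_eq[OF \<gamma>] d_def[symmetric]
      by (rule mult_right_mono) (simp add: \<open>0 \<le> M\<close>)
    finally show ?thesis unfolding d_def by (simp add: mult_ac)
  qed
  then have "onorm (\<lambda>v. (cross_op \<gamma> - matrix proj) *v v) \<le> \<alpha> * sqrt M" by (rule onorm_le)
  then show ?thesis
    unfolding oblique_approx_dual_def M_def[symmetric] using \<open>0 \<le> \<alpha>\<close> \<open>0 \<le> M\<close> \<gamma> by auto
qed

end

theorem proposition6p3:
  fixes W V :: "(real^'n) set" and \<mu> \<nu> :: "(real^'n) measure"
    and A\<^sub>\<mu> B\<^sub>\<mu> A\<^sub>\<nu> B\<^sub>\<nu> :: real
  assumes "subspace W" and "subspace V"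
    and "W \<inter> orthogonal_comp V = {0}"
    and "\<forall>x. \<exists>w\<in>W. \<exists>u\<in>orthogonal_comp V. x = w + u"
    and "prob_frame \<mu> W A\<^sub>\<mu> B\<^sub>\<mu>"
    and "prob_frame \<nu> V A\<^sub>\<nu> B\<^sub>\<nu>"
  shows "(\<forall>\<epsilon> A B. oblique_approx_dual \<epsilon> \<nu> \<mu> W V \<and> prob_frame \<nu> V A B \<longrightarrow>
            consistent_reconstruction (sqrt B * \<epsilon>) \<mu> \<nu>)
       \<and> (\<forall>\<alpha>. consistent_reconstruction \<alpha> \<mu> \<nu> \<longrightarrow>
            oblique_approx_dual
              (\<alpha> * sqrt (M2 (distr \<nu> borel
                 (\<lambda>y. oblique_proj W (orthogonal_comp V) (mp_inverse (frame_op \<nu>) *v y)))))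
              \<nu> \<mu> W V)"
proof -
  have pair: "oblique_frame_pair W V \<mu> \<nu> A B" if "prob_frame \<nu> V A B" for A B
  proof
    show "\<mu> \<in> P2 W" using assms(5) unfolding prob_frame_def by simp
  qed (use assms(1-4) that in \<open>simp_all add: subspace_orthogonal_comp\<close>)
  show ?thesis
    using oblique_frame_pair.consistent_reconstruction_if_oblique_approx_dual[OF pair]
      oblique_frame_pair.oblique_approx_dual_if_consistent_reconstruction[OF pair[OF assms(6)]]
    by blast
qed

end
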